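(* Let $\beta=(\beta_{ij})_{i,j\ge 0,\ i+j\le 6}$ be a real sequence such that $\mathcal M(3)(\beta)$ is positive semidefinite, $\mathcal M(2)(\beta)$ is positive definite, and $\operatorname{rank}\mathcal M(3)=\operatorname{card}\mathcal V=7$, where $\mathcal V$ is the algebraic variety of $\mathcal M(3)$. Suppose the columns $\mathcal B_3=\{1,X,Y,X^2,XY,Y^2,XY^2\}$ form a basis of the column space of $\mathcal M(3)$. Then $\beta$ admits a representing measure if and only if $\mathcal M(3)$ is weakly consistent.
   Context: The moment matrix $\mathcal M(3)(\beta)$ has rows and columns indexed by $1,X,Y,X^2,XY,Y^2,X^3,X^2Y,XY^2,Y^3$ in this order, with entry $\beta_{i+k,j+l}$ in row $X^iY^j$ and column $X^kY^l$; $\mathcal M(2)(\beta)$ is its principal submatrix indexed by monomials of degree $\le 2$. For $p(x,y)=\sum a_{ij}x^iy^j$ of degree $\le 3$, $p(X,Y)=\sum a_{ij}X^iY^j$ is the corresponding linear combination of columns. The algebraic variety is $\mathcal V=\bigcap\{\mathcal Z(p):\deg p\le 3,\ p(X,Y)=\mathbf 0\}$ with $\mathcal Z(p)$ the real zero set of $p$. A representing measure is a positive Borel measure $\mu$ on $\mathbb R^2$ with $\beta_{ij}=\int x^iy^j\,d\mu$ for $i+j\le 6$. $\mathcal M(3)$ is weakly consistent if every polynomial $p$ of degree $\le 3$ vanishing on $\mathcal V$ satisfies $p(X,Y)=\mathbf 0$. *)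

theory Defs
  imports "HOL-Analysis.Analysis" "HOL-Probability.Probability"
begin

datatype mon3 = M1 | MX | MY | MXX | MXY | MYY | MXXX | MXXY | MXYY | MYYY

instance mon3 :: finite
proof
  have "UNIV = {M1, MX, MY, MXX, MXY, MYY, MXXX, MXXY, MXYY, MYYY}"
    using mon3.exhaust by auto
  then show "finite (UNIV :: mon3 set)" by (metis finite.emptyI finite_insert)
qed

datatype mon2 = N1 | NX | NY | NXX | NXY | NYY

instance mon2 :: finite
proof
  have "UNIV = {N1, NX, NY, NXX, NXY, NYY}"
    using mon2.exhaust by auto
  then show "finite (UNIV :: mon2 set)" by (metis finite.emptyI finite_insert)
qed

fun expo :: "mon3 \<Rightarrow> nat \<times> nat" where
  "expo M1 = (0,0)" | "expo MX = (1,0)" | "expo MY = (0,1)"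
| "expo MXX = (2,0)" | "expo MXY = (1,1)" | "expo MYY = (0,2)"
| "expo MXXX = (3,0)" | "expo MXXY = (2,1)" | "expo MXYY = (1,2)" | "expo MYYY = (0,3)"

fun emb2 :: "mon2 \<Rightarrow> mon3" where
  "emb2 N1 = M1" | "emb2 NX = MX" | "emb2 NY = MY"
| "emb2 NXX = MXX" | "emb2 NXY = MXY" | "emb2 NYY = MYY"

definition moment_matrix3 :: "(nat \<Rightarrow> nat \<Rightarrow> real) \<Rightarrow> real^mon3^mon3" where
  "moment_matrix3 \<beta> = (\<chi> r c. \<beta> (fst (expo r) + fst (expo c)) (snd (expo r) + snd (expo c)))"

definition moment_matrix2 :: "(nat \<Rightarrow> nat \<Rightarrow> real) \<Rightarrow> real^mon2^mon2" where
  "moment_matrix2 \<beta> = (\<chi> r c. moment_matrix3 \<beta> $ emb2 r $ emb2 c)"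

definition psd :: "real^'n^'n \<Rightarrow> bool" where
  "psd A \<longleftrightarrow> (\<forall>v. 0 \<le> v \<bullet> (A *v v))"

definition pd :: "real^'n^'n \<Rightarrow> bool" where
  "pd A \<longleftrightarrow> (\<forall>v. v \<noteq> 0 \<longrightarrow> 0 < v \<bullet> (A *v v))"

text \<open>A polynomial of degree at most 3 is given by its coefficient vector a (indexed by monomials).
  poly_eval a (x,y) = p(x,y); col_comb M a = p(X,Y), the combination of columns of M.\<close>
definition poly_eval :: "real^mon3 \<Rightarrow> real \<times> real \<Rightarrow> real" where
  "poly_eval a z = (\<Sum>m\<in>UNIV. a $ m * fst z ^ fst (expo m) * snd z ^ snd (expo m))"

definition col_comb :: "real^mon3^mon3 \<Rightarrow> real^mon3 \<Rightarrow> real^mon3" where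
  "col_comb M a = (\<Sum>m\<in>UNIV. a $ m *s column m M)"

definition zero_set :: "real^mon3 \<Rightarrow> (real \<times> real) set" where
  "zero_set a = {z. poly_eval a z = 0}"

definition variety :: "real^mon3^mon3 \<Rightarrow> (real \<times> real) set" where
  "variety M = \<Inter> {zero_set a | a. col_comb M a = 0}"

definition weakly_consistent :: "real^mon3^mon3 \<Rightarrow> bool" where
  "weakly_consistent M \<longleftrightarrow>
     (\<forall>a. (\<forall>z\<in>variety M. poly_eval a z = 0) \<longrightarrow> col_comb M a = 0)"

definition representing_measure :: "(nat \<Rightarrow> nat \<Rightarrow> real) \<Rightarrow> (real \<times> real) measure \<Rightarrow> bool" where
  "representing_measure \<beta> \<mu> \<longleftrightarrow> sets \<mu> = sets borel \<and>
     (\<forall>i j. i + j \<le> 6 \<longrightarrow>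
        integrable \<mu> (\<lambda>z. fst z ^ i * snd z ^ j) \<and>
        \<beta> i j = (\<integral>z. fst z ^ i * snd z ^ j \<partial>\<mu>))"

definition cols_basis :: "real^mon3^mon3 \<Rightarrow> mon3 set \<Rightarrow> bool" where
  "cols_basis M B \<longleftrightarrow> inj_on (\<lambda>m. column m M) B \<and>
     independent ((\<lambda>m. column m M) ` B) \<and>
     span ((\<lambda>m. column m M) ` B) = span (columns M)"

end

theory Submission
  imports Defs
begin

text \<open>
  If mu represents beta, every polynomial in the kernel of M(3) has zero L2(mu)-norm, so mu is
  carried by the variety V; a polynomial vanishing on V then pairs to zero with every monomial,
  i.e. lies in the kernel. This is weak consistency.

  Conversely, under weak consistency the kernel of M(3) consists exactly of the polynomials
  vanishing on the seven points p_i of V, and evaluation on V maps the span of B_3 onto R^7.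
  Hence the moment form is <p, q> = p|V . W q|V for a Gram matrix W, and it suffices to show
  that W is diagonal: then the sum of W_ii times the Dirac measure at p_i represents beta.
  The Hankel structure of M(3) says that W commutes with multiplication by x and by y on values
  of quadratics, a hyperplane of R^7 complemented by the values of XY^2. Writing
  Y^3 = r + d XY^2 with deg r <= 2 shows that W commutes with multiplication by y - d x
  everywhere, so W_ij = 0 unless p_i and p_j lie on one line y - d x = c. Such a line contains at
  most three points of V (a cubic vanishing at four of them vanishes on the whole line), and
  interpolation along it shows that the x-commutator (x_i - x_j) W_ij, which has no entries
  between the line and its complement, vanishes on the line as well.
\<close>

section \<open>Polynomials and the moment form\<close>

lemma UNIV_mon3: "(UNIV :: mon3 set) = {M1, MX, MY, MXX, MXY, MYY, MXXX, MXXY, MXYY, MYYY}"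
  using mon3.exhaust by auto

lemma sum_UNIV_mon3:
  "(\<Sum>m\<in>UNIV. f m) = f M1 + f MX + f MY + f MXX + f MXY + f MYY + f MXXX + f MXXY + f MXYY + f MYYY"
  by (simp add: UNIV_mon3 algebra_simps)

lemma expo_degree_le: "fst (expo m) + snd (expo m) \<le> 3"
  by (cases m) auto

lemma expo_add_surj:
  assumes "i + j \<le> 6"
  obtains r c where "fst (expo r) + fst (expo c) = i" "snd (expo r) + snd (expo c) = j"
proof -
  have expo_onto: "\<exists>m. expo m = (a, b)" if "a + b \<le> 3" for a b
  proof -
    have "a \<le> 3" "b \<le> 3" using that by auto
    then show ?thesis
      using that by (auto simp: le_Suc_eq numeral_3_eq_3 numeral_2_eq_2
          intro: exI[of _ M1] exI[of _ MX] exI[of _ MY] exI[of _ MXX] exI[of _ MXY] exI[of _ MYY]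
          exI[of _ MXXX] exI[of _ MXXY] exI[of _ MXYY] exI[of _ MYYY])
  qed
  define i1 where "i1 = min i 3"
  define j1 where "j1 = min j (3 - i1)"
  have "i1 + j1 \<le> 3"
    by (simp add: i1_def j1_def)
  then obtain r where r: "expo r = (i1, j1)"
    using expo_onto by blast
  have "(i - i1) + (j - j1) \<le> 3"
    using assms by (simp add: i1_def j1_def)
  then obtain c where c: "expo c = (i - i1, j - j1)"
    using expo_onto by blast
  show thesis
    by (rule that[of r c]) (auto simp: r c i1_def j1_def)
qed

lemma col_comb_eq_matrix_vector_mult: "col_comb M a = M *v a"
  unfolding col_comb_def by (simp add: matrix_mult_sum)

definition monomials :: "real \<times> real \<Rightarrow> real^mon3" where
  "monomials z = (\<chi> m. fst z ^ fst (expo m) * snd z ^ snd (expo m))"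

lemma poly_eval_eq_inner: "poly_eval a z = a \<bullet> monomials z"
  unfolding poly_eval_def monomials_def inner_vec_def by (simp add: mult.assoc)

lemma poly_eval_axis: "poly_eval (axis m 1) z = monomials z $ m"
  by (simp add: poly_eval_eq_inner inner_axis')

lemma variety_iff: "z \<in> variety M \<longleftrightarrow> (\<forall>a. M *v a = 0 \<longrightarrow> poly_eval a z = 0)"
  unfolding variety_def zero_set_def col_comb_eq_matrix_vector_mult by blast

lemma weakly_consistent_iff:
  "weakly_consistent M \<longleftrightarrow> (\<forall>a. (\<forall>z\<in>variety M. poly_eval a z = 0) \<longrightarrow> M *v a = 0)"
  unfolding weakly_consistent_def col_comb_eq_matrix_vector_mult ..

definition moment_form :: "(nat \<Rightarrow> nat \<Rightarrow> real) \<Rightarrow> real^mon3 \<Rightarrow> real^mon3 \<Rightarrow> real" where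
  "moment_form \<beta> a b = a \<bullet> (moment_matrix3 \<beta> *v b)"

lemma moment_matrix3_entry:
  "moment_matrix3 \<beta> $ r $ c = \<beta> (fst (expo r) + fst (expo c)) (snd (expo r) + snd (expo c))"
  unfolding moment_matrix3_def by simp

lemma moment_form_expand:
  "moment_form \<beta> a b = (\<Sum>r\<in>UNIV. \<Sum>c\<in>UNIV. a$r * b$c * moment_matrix3 \<beta> $ r $ c)"
  unfolding moment_form_def inner_vec_def matrix_vector_mult_def
  by (auto simp: sum_distrib_left intro!: sum.cong)

lemma moment_form_commute: "moment_form \<beta> a b = moment_form \<beta> b a"
  unfolding moment_form_expand moment_matrix3_entry
  by (subst sum.swap) (simp add: add.commute mult.commute mult.left_commute)

lemma bilinear_moment_form: "bilinear (moment_form \<beta>)"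
  unfolding bilinear_def moment_form_def
  by (auto intro!: linearI simp: inner_add_left inner_add_right matrix_vector_right_distrib
      matrix_vector_mult_scaleR)

section \<open>Representing measures force weak consistency\<close>

lemma poly_eval_mult_expand:
  "poly_eval a z * poly_eval b z =
     (\<Sum>r\<in>UNIV. \<Sum>c\<in>UNIV. a$r * b$c * (monomials z $ r * monomials z $ c))"
  unfolding poly_eval_eq_inner inner_vec_def sum_product
  by (intro sum.cong refl) (simp add: algebra_simps)

lemma representing_measure_moment_matrix3:
  assumes "representing_measure \<beta> \<mu>"
  shows "integrable \<mu> (\<lambda>z. monomials z $ r * monomials z $ c)"
    and "moment_matrix3 \<beta> $ r $ c = (\<integral>z. monomials z $ r * monomials z $ c \<partial>\<mu>)"
proof -
  let ?i = "fst (expo r) + fst (expo c)" and ?j = "snd (expo r) + snd (expo c)"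
  have mon: "monomials z $ r * monomials z $ c = fst z ^ ?i * snd z ^ ?j" for z
    by (simp add: monomials_def power_add algebra_simps)
  have "?i + ?j \<le> 6"
    using expo_degree_le[of r] expo_degree_le[of c] by linarith
  then show "integrable \<mu> (\<lambda>z. monomials z $ r * monomials z $ c)"
    and "moment_matrix3 \<beta> $ r $ c = (\<integral>z. monomials z $ r * monomials z $ c \<partial>\<mu>)"
    using assms unfolding representing_measure_def mon moment_matrix3_entry by auto
qed

lemma moment_form_eq_integral:
  assumes "representing_measure \<beta> \<mu>"
  shows "integrable \<mu> (\<lambda>z. poly_eval a z * poly_eval b z)"
    and "moment_form \<beta> a b = (\<integral>z. poly_eval a z * poly_eval b z \<partial>\<mu>)"
proof -
  note mon = representing_measure_moment_matrix3[OF assms]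
  show "integrable \<mu> (\<lambda>z. poly_eval a z * poly_eval b z)"
    unfolding poly_eval_mult_expand by (simp add: mon)
  show "moment_form \<beta> a b = (\<integral>z. poly_eval a z * poly_eval b z \<partial>\<mu>)"
    unfolding poly_eval_mult_expand moment_form_expand
    by (simp add: mon Bochner_Integration.integral_sum[symmetric])
qed

lemma kernel_vanishes_AE:
  assumes "representing_measure \<beta> \<mu>" "moment_matrix3 \<beta> *v a = 0"
  shows "AE z in \<mu>. poly_eval a z = 0"
proof -
  have "(\<integral>z. poly_eval a z * poly_eval a z \<partial>\<mu>) = 0"
    using moment_form_eq_integral(2)[OF assms(1), of a a] assms(2) by (simp add: moment_form_def)
  then have "AE z in \<mu>. poly_eval a z * poly_eval a z = 0"
    using integral_nonneg_eq_0_iff_AE[OF moment_form_eq_integral(1)[OF assms(1)]] by simp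
  then show ?thesis by simp
qed

lemma representing_measure_AE_variety:
  assumes "representing_measure \<beta> \<mu>"
  shows "AE z in \<mu>. z \<in> variety (moment_matrix3 \<beta>)"
proof -
  let ?K = "{b. moment_matrix3 \<beta> *v b = 0}"
  obtain K where K: "K \<subseteq> ?K" "independent K" "?K \<subseteq> span K"
    by (rule basis_exists)
  have "countable K"
    using independent_bound[OF K(2)] by (simp add: countable_finite)
  then have "AE z in \<mu>. \<forall>b\<in>K. poly_eval b z = 0"
    using K(1) kernel_vanishes_AE[OF assms] by (subst AE_ball_countable) auto
  moreover have "z \<in> variety (moment_matrix3 \<beta>)" if "\<forall>b\<in>K. poly_eval b z = 0" for z
  proof -
    have "poly_eval b z = 0" if "b \<in> span K" for b
      using that \<open>\<forall>b\<in>K. poly_eval b z = 0\<close>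
      by (induction rule: span_induct_alt) (auto simp: poly_eval_eq_inner inner_add_left)
    then show ?thesis
      using K(3) unfolding variety_iff by blast
  qed
  ultimately show ?thesis
    by (auto elim!: eventually_mono)
qed

theorem weakly_consistent_if_representing_measure:
  assumes "representing_measure \<beta> \<mu>"
  shows "weakly_consistent (moment_matrix3 \<beta>)"
  unfolding weakly_consistent_iff
proof (intro allI impI)
  fix a assume vanish: "\<forall>z\<in>variety (moment_matrix3 \<beta>). poly_eval a z = 0"
  have "AE z in \<mu>. poly_eval a z = 0"
    using representing_measure_AE_variety[OF assms] vanish by (auto elim!: eventually_mono)
  have "(moment_matrix3 \<beta> *v a) $ r = 0" for r
  proof -
    have "(moment_matrix3 \<beta> *v a) $ r = moment_form \<beta> (axis r 1) a"
      by (simp add: moment_form_def inner_axis')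
    also have "\<dots> = (\<integral>z. poly_eval (axis r 1) z * poly_eval a z \<partial>\<mu>)"
      by (rule moment_form_eq_integral(2)[OF assms])
    also have "\<dots> = (\<integral>z. 0 \<partial>\<mu>)"
      using \<open>AE z in \<mu>. poly_eval a z = 0\<close> borel_measurable_integrable[OF moment_form_eq_integral(1)[OF assms]]
      by (intro integral_cong_AE) (auto elim!: eventually_mono)
    finally show ?thesis by simp
  qed
  then show "moment_matrix3 \<beta> *v a = 0"
    by (simp add: vec_eq_iff)
qed

section \<open>Multiplication by \<open>x\<close> and \<open>y\<close>\<close>

definition degree_le2 :: "real^mon3 \<Rightarrow> bool" where
  "degree_le2 a \<longleftrightarrow> a $ MXXX = 0 \<and> a $ MXXY = 0 \<and> a $ MXYY = 0 \<and> a $ MYYY = 0"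

text \<open>\<open>times_x\<close> and \<open>times_y\<close> are only meaningful on \<open>degree_le2\<close> vectors:
  cubic coefficients are discarded.\<close>

definition times_x :: "real^mon3 \<Rightarrow> real^mon3" where
  "times_x a = (\<chi> m. case m of MX \<Rightarrow> a$M1 | MXX \<Rightarrow> a$MX | MXY \<Rightarrow> a$MY
     | MXXX \<Rightarrow> a$MXX | MXXY \<Rightarrow> a$MXY | MXYY \<Rightarrow> a$MYY | _ \<Rightarrow> 0)"

definition times_y :: "real^mon3 \<Rightarrow> real^mon3" where
  "times_y a = (\<chi> m. case m of MY \<Rightarrow> a$M1 | MXY \<Rightarrow> a$MX | MYY \<Rightarrow> a$MY
     | MXXY \<Rightarrow> a$MXX | MXYY \<Rightarrow> a$MXY | MYYY \<Rightarrow> a$MYY | _ \<Rightarrow> 0)"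

lemma poly_eval_times_x: "degree_le2 a \<Longrightarrow> poly_eval (times_x a) z = fst z * poly_eval a z"
  unfolding poly_eval_def sum_UNIV_mon3 degree_le2_def times_x_def
  by (simp add: algebra_simps power2_eq_square power3_eq_cube)

lemma poly_eval_times_y: "degree_le2 a \<Longrightarrow> poly_eval (times_y a) z = snd z * poly_eval a z"
  unfolding poly_eval_def sum_UNIV_mon3 degree_le2_def times_y_def
  by (simp add: algebra_simps power2_eq_square power3_eq_cube)

lemma moment_form_times_x:
  "degree_le2 f \<Longrightarrow> degree_le2 g \<Longrightarrow> moment_form \<beta> (times_x f) g = moment_form \<beta> f (times_x g)"
  unfolding moment_form_expand moment_matrix3_entry sum_UNIV_mon3 degree_le2_def times_x_def
  by (simp add: algebra_simps eval_nat_numeral)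

lemma moment_form_times_y:
  "degree_le2 f \<Longrightarrow> degree_le2 g \<Longrightarrow> moment_form \<beta> (times_y f) g = moment_form \<beta> f (times_y g)"
  unfolding moment_form_expand moment_matrix3_entry sum_UNIV_mon3 degree_le2_def times_y_def
  by (simp add: algebra_simps eval_nat_numeral)

lemma moment_form_times_y_XYY:
  "degree_le2 f \<Longrightarrow> moment_form \<beta> (times_y f) (axis MXYY 1) = moment_form \<beta> (times_x f) (axis MYYY 1)"
  unfolding moment_form_expand moment_matrix3_entry sum_UNIV_mon3 degree_le2_def times_x_def times_y_def
  by (simp add: algebra_simps eval_nat_numeral axis_def)

section \<open>Column bases and skew forms\<close>

definition supported_on :: "'n set \<Rightarrow> real^'n \<Rightarrow> bool" where
  "supported_on B a \<longleftrightarrow> (\<forall>m. m \<notin> B \<longrightarrow> a $ m = 0)"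

lemma matrix_vector_mult_supported_on:
  fixes M :: "real^'n^'m"
  assumes "supported_on B a"
  shows "M *v a = (\<Sum>m\<in>B. a $ m *\<^sub>R column m M)"
proof -
  have "M *v a = (\<Sum>m\<in>UNIV. a $ m *\<^sub>R column m M)"
    by (simp add: matrix_mult_sum scalar_mult_eq_scaleR)
  also have "\<dots> = (\<Sum>m\<in>B. a $ m *\<^sub>R column m M)"
    using assms unfolding supported_on_def by (intro sum.mono_neutral_right) auto
  finally show ?thesis .
qed

lemma cols_basis_kernel_eq_0:
  assumes basis: "cols_basis M B" and "supported_on B a" and "M *v a = 0"
  shows "a = 0"
proof -
  let ?col = "\<lambda>m. column m M"
  have inj: "inj_on ?col B" and indep: "independent (?col ` B)"
    using basis unfolding cols_basis_def by auto
  have "(\<Sum>v\<in>?col ` B. a $ inv_into B ?col v *\<^sub>R v) = (\<Sum>m\<in>B. a $ m *\<^sub>R ?col m)"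
    by (simp add: sum.reindex[OF inj] inv_into_f_f[OF inj])
  also have "\<dots> = 0"
    using assms(2,3) by (simp add: matrix_vector_mult_supported_on)
  finally have "a $ m = 0" if "m \<in> B" for m
    using independentD[OF indep finite_imageI[OF finite] order.refl, of "\<lambda>v. a $ inv_into B ?col v"]
      that inv_into_f_f[OF inj that] by (force simp: scalar_mult_eq_scaleR)
  with assms(2) show ?thesis
    unfolding supported_on_def by (auto simp: vec_eq_iff)
qed

lemma cols_basis_reduce:
  assumes basis: "cols_basis M B"
  obtains r where "supported_on B r" "M *v r = M *v a"
proof -
  let ?col = "\<lambda>m. column m M"
  have inj: "inj_on ?col B" and span_eq: "span (?col ` B) = span (columns M)"
    using basis unfolding cols_basis_def by auto
  have "M *v a \<in> span (?col ` B)"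
    unfolding span_eq by (rule matrix_vector_mult_in_columnspace)
  then obtain u where "M *v a = (\<Sum>v\<in>?col ` B. u v *\<^sub>R v)"
    unfolding span_finite[OF finite_imageI[OF finite]] by (auto simp: scalar_mult_eq_scaleR)
  also have "\<dots> = (\<Sum>m\<in>B. u (?col m) *\<^sub>R ?col m)"
    by (simp add: sum.reindex[OF inj])
  finally have Ma: "M *v a = (\<Sum>m\<in>B. u (?col m) *\<^sub>R ?col m)" .
  define r where "r = (\<chi> m. if m \<in> B then u (?col m) else 0)"
  have "supported_on B r"
    by (simp add: supported_on_def r_def)
  moreover have "M *v r = M *v a"
    using \<open>supported_on B r\<close> by (simp add: matrix_vector_mult_supported_on Ma r_def)
  ultimately show thesis by (rule that)
qed

lemma axis_inner_matrix_axis: "axis i 1 \<bullet> (Z *v axis j 1) = Z $ i $ j"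
  by (simp add: matrix_vector_mult_basis inner_axis' column_def)

lemma inner_matrix_vector_mult_expand:
  "u \<bullet> (Z *v w) = (\<Sum>i\<in>UNIV. \<Sum>j\<in>UNIV. u $ i * Z $ i $ j * w $ j)"
  unfolding inner_vec_def matrix_vector_mult_def by (simp add: sum_distrib_left mult.assoc)

lemma inner_skew_matrix:
  fixes Z :: "real^'n^'n"
  assumes "\<And>i j. Z $ i $ j = - Z $ j $ i"
  shows "u \<bullet> (Z *v w) = - (w \<bullet> (Z *v u))"
proof -
  have "u $ i * Z $ i $ j * w $ j = - (w $ j * Z $ j $ i * u $ i)" for i j
    using assms[of i j] by simp
  then show ?thesis
    unfolding inner_matrix_vector_mult_expand by (subst sum.swap) (simp add: sum_negf)
qed

lemma skew_matrix_eq_0: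
  fixes Z :: "real^'n^'n"
  assumes skew: "\<And>i j. Z $ i $ j = - Z $ j $ i"
    and decomp: "\<And>v. \<exists>u\<in>U. \<exists>t. v = u + t *\<^sub>R e"
    and UU: "\<And>u w. u \<in> U \<Longrightarrow> w \<in> U \<Longrightarrow> u \<bullet> (Z *v w) = 0"
    and Ue: "\<And>u. u \<in> U \<Longrightarrow> u \<bullet> (Z *v e) = 0"
  shows "Z = 0"
proof -
  have eZ: "e \<bullet> (Z *v u) = 0" if "u \<in> U \<or> u = e" for u
    using inner_skew_matrix[OF skew, of e u] that Ue by auto
  have "v \<bullet> (Z *v w) = 0" for v w
  proof -
    obtain u s where "u \<in> U" "v = u + s *\<^sub>R e" using decomp by blast
    moreover obtain u' t where "u' \<in> U" "w = u' + t *\<^sub>R e" using decomp by blast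
    ultimately show ?thesis
      by (simp add: inner_add_left inner_add_right matrix_vector_right_distrib
          matrix_vector_mult_scaleR UU Ue eZ)
  qed
  then show ?thesis
    using axis_inner_matrix_axis[of _ Z] by (simp add: vec_eq_iff)
qed

lemma skew_matrix_entry_eq_0:
  fixes Z :: "real^'n^'n" and n :: "real^'n"
  assumes vanish: "\<And>u w. n \<bullet> u = 0 \<Longrightarrow> n \<bullet> w = 0 \<Longrightarrow> u \<bullet> (Z *v w) = 0"
    and "n $ l \<noteq> 0" "Z $ l $ l = 0" "Z $ i $ l = 0" "Z $ l $ j = 0"
  shows "Z $ i $ j = 0"
proof -
  define u :: "real^'n" where "u = axis i 1 - (n $ i / n $ l) *\<^sub>R axis l 1"
  define w :: "real^'n" where "w = axis j 1 - (n $ j / n $ l) *\<^sub>R axis l 1"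
  have "n \<bullet> u = 0" "n \<bullet> w = 0"
    using \<open>n $ l \<noteq> 0\<close> by (simp_all add: u_def w_def inner_diff_right inner_axis)
  then have "u \<bullet> (Z *v w) = 0" by (rule vanish)
  then show ?thesis
    using assms(3-5)
    by (simp add: u_def w_def inner_diff_left inner_diff_right matrix_vector_mult_diff_distrib
        matrix_vector_mult_scaleR axis_inner_matrix_axis)
qed

definition diag_commutator :: "real^'n \<Rightarrow> real^'n^'n \<Rightarrow> real^'n^'n" where
  "diag_commutator c W = (\<chi> i j. (c $ i - c $ j) * W $ i $ j)"

lemma inner_diag_commutator:
  "u \<bullet> (diag_commutator c W *v w) = (c * u) \<bullet> (W *v w) - u \<bullet> (W *v (c * w))"
  unfolding diag_commutator_def inner_matrix_vector_mult_expand
  by (simp add: sum_subtractf[symmetric] algebra_simps)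

lemma diag_commutator_skew:
  "(\<And>i j. W $ i $ j = W $ j $ i) \<Longrightarrow> diag_commutator c W $ i $ j = - diag_commutator c W $ j $ i"
  unfolding diag_commutator_def by (simp add: algebra_simps)

section \<open>Polynomials along a line\<close>

lemma poly_eval_restrict_line:
  obtains P where "degree P \<le> 3" "\<And>x. poly P x = poly_eval a (x, d * x + c)"
proof
  let ?term = "\<lambda>m. smult (a $ m) ([:0, 1:] ^ fst (expo m) * [:c, d:] ^ snd (expo m))"
  have "degree (?term m) \<le> 3" for m
  proof -
    have "degree (?term m) \<le> degree ([:0, 1:] ^ fst (expo m) :: real poly) + degree ([:c, d:] ^ snd (expo m))"
      using degree_smult_le degree_mult_le order.trans by blast
    also have "\<dots> \<le> fst (expo m) * 1 + snd (expo m) * 1"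
      by (intro add_mono degree_power_le[THEN order.trans] mult_le_mono2) simp_all
    also have "\<dots> \<le> 3"
      using expo_degree_le[of m] by simp
    finally show ?thesis .
  qed
  then show "degree (\<Sum>m\<in>UNIV. ?term m) \<le> 3"
    by (intro degree_sum_le) auto
  show "poly (\<Sum>m\<in>UNIV. ?term m) x = poly_eval a (x, d * x + c)" for x
    unfolding poly_eval_def poly_sum by (simp add: poly_power mult.assoc add.commute[of c] mult.commute[of x])
qed

lemma card_variety_on_line_le:
  assumes "finite (variety M)"
  shows "card {z \<in> variety M. snd z = d * fst z + c} \<le> 3"
proof (rule ccontr)
  let ?L = "{z \<in> variety M. snd z = d * fst z + c}"
  assume "\<not> card ?L \<le> 3"
  moreover have "inj_on fst ?L"
    by (auto intro!: inj_onI simp: prod_eq_iff)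
  ultimately have many: "4 \<le> card (fst ` ?L)"
    by (simp add: card_image)
  have "(x, d * x + c) \<in> variety M" for x
    unfolding variety_iff
  proof (intro allI impI)
    fix a assume "M *v a = 0"
    obtain P where P: "degree P \<le> 3" "\<And>x. poly P x = poly_eval a (x, d * x + c)"
      using poly_eval_restrict_line[where a = a and c = c and d = d] by blast
    have "fst ` ?L \<subseteq> {x. poly P x = 0}"
      using \<open>M *v a = 0\<close> by (force simp: P(2) variety_iff)
    have "P = 0"
    proof (rule ccontr)
      assume "P \<noteq> 0"
      then have "card (fst ` ?L) \<le> card {x. poly P x = 0}"
        by (intro card_mono poly_roots_finite \<open>fst ` ?L \<subseteq> _\<close>)
      also have "\<dots> \<le> 3"
        using card_poly_roots_bound[OF \<open>P \<noteq> 0\<close>] P(1) by linarith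
      finally show False
        using many by linarith
    qed
    then show "poly_eval a (x, d * x + c) = 0"
      using P(2) by simp
  qed
  then have "range (\<lambda>x. (x, d * x + c)) \<subseteq> variety M"
    by auto
  moreover have "infinite (range (\<lambda>x::real. (x, d * x + c)))"
    using finite_imageD[of "\<lambda>x. (x, d * x + c)" UNIV] infinite_UNIV_char_0 by (auto intro: injI)
  ultimately show False
    using assms finite_subset by blast
qed

lemma exists_degree_le2_poly_eval_eq_poly:
  fixes P :: "real poly"
  assumes "degree P \<le> 2"
  obtains f where "degree_le2 f" "\<And>z. poly_eval f z = poly P (fst z)"
proof
  let ?f = "coeff P 0 *\<^sub>R axis M1 1 + coeff P 1 *\<^sub>R axis MX 1 + coeff P 2 *\<^sub>R axis MXX 1 :: real^mon3"
  show "degree_le2 ?f"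
    by (simp add: degree_le2_def axis_def)
  show "poly_eval ?f z = poly P (fst z)" for z
  proof -
    have "poly P (fst z) = (\<Sum>i\<le>2. coeff P i * fst z ^ i)"
      using assms by (simp add: poly_altdef sum.mono_neutral_left coeff_eq_0)
    then show ?thesis
      by (simp add: poly_eval_eq_inner inner_add_left inner_axis' numeral_2_eq_2 monomials_def)
  qed
qed

section \<open>Weak consistency yields an atomic representing measure\<close>

definition atomic_measure :: "('p::finite \<Rightarrow> real) \<Rightarrow> ('p \<Rightarrow> real \<times> real) \<Rightarrow> (real \<times> real) measure" where
  "atomic_measure \<rho> pts = distr (density (count_space UNIV) (\<lambda>k. ennreal (\<rho> k))) borel pts"

lemma atomic_measure_integral:
  assumes "\<And>k. 0 \<le> \<rho> k" and f: "f \<in> borel_measurable borel"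
  shows "integrable (atomic_measure \<rho> pts) f"
    and "(\<integral>z. f z \<partial>atomic_measure \<rho> pts) = (\<Sum>k\<in>UNIV. \<rho> k * f (pts k))"
proof -
  have pts: "pts \<in> density (count_space UNIV) (\<lambda>k. ennreal (\<rho> k)) \<rightarrow>\<^sub>M borel"
    by (simp add: measurable_count_space_eq1)
  have "AE k in count_space UNIV. 0 \<le> \<rho> k"
    using assms(1) by simp
  then show "integrable (atomic_measure \<rho> pts) f"
    and "(\<integral>z. f z \<partial>atomic_measure \<rho> pts) = (\<Sum>k\<in>UNIV. \<rho> k * f (pts k))"
    unfolding atomic_measure_def
    by (simp_all add: integrable_distr_eq[OF pts f] integrable_density integrable_count_space
        integral_distr[OF pts f] integral_density lebesgue_integral_count_space_finite)
qed

abbreviation basis3 :: "mon3 set" where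
  "basis3 \<equiv> {M1, MX, MY, MXX, MXY, MYY, MXYY}"

lemma degree_le2_iff_supported_on:
  "degree_le2 a \<longleftrightarrow> supported_on basis3 a \<and> a $ MXYY = 0"
proof -
  have "m \<notin> basis3 \<longleftrightarrow> m \<in> {MXXX, MXXY, MYYY}" for m
    by (cases m) auto
  then show ?thesis
    unfolding degree_le2_def supported_on_def by auto
qed

text \<open>\<open>pts\<close> enumerates V by a seven-element index type, so functions on V are vectors
  in \<open>real^'p\<close>.\<close>

locale seven_point_variety =
  fixes \<beta> :: "nat \<Rightarrow> nat \<Rightarrow> real" and pts :: "'p::finite \<Rightarrow> real \<times> real"
  assumes psd: "psd (moment_matrix3 \<beta>)"
    and cols_basis: "cols_basis (moment_matrix3 \<beta>) basis3"
    and consistent: "weakly_consistent (moment_matrix3 \<beta>)"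
    and pts_bij: "bij_betw pts UNIV (variety (moment_matrix3 \<beta>))"
    and card_points: "CARD('p) = 7"
begin

abbreviation M :: "real^mon3^mon3" where
  "M \<equiv> moment_matrix3 \<beta>"

definition ev :: "real^mon3 \<Rightarrow> real^'p" where
  "ev a = (\<chi> i. poly_eval a (pts i))"

definition xcoord :: "real^'p" where
  "xcoord = (\<chi> i. fst (pts i))"

definition ycoord :: "real^'p" where
  "ycoord = (\<chi> i. snd (pts i))"

lemma linear_ev: "linear ev"
  by (rule linearI) (simp_all add: ev_def poly_eval_eq_inner inner_add_left vec_eq_iff)

lemma variety_eq_range: "variety M = range pts"
  using pts_bij by (simp add: bij_betw_def)

lemma ev_eq_0_iff: "ev a = 0 \<longleftrightarrow> M *v a = 0"
proof
  assume "ev a = 0"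
  then have "\<forall>z\<in>variety M. poly_eval a z = 0"
    by (auto simp: variety_eq_range ev_def vec_eq_iff)
  then show "M *v a = 0"
    using consistent unfolding weakly_consistent_iff by blast
next
  assume "M *v a = 0"
  then have "poly_eval a (pts i) = 0" for i
    using variety_iff[of "pts i" M] variety_eq_range by blast
  then show "ev a = 0"
    by (simp add: ev_def vec_eq_iff)
qed

lemma ev_times_x: "degree_le2 a \<Longrightarrow> ev (times_x a) = xcoord * ev a"
  by (simp add: vec_eq_iff ev_def xcoord_def poly_eval_times_x)

lemma ev_times_y: "degree_le2 a \<Longrightarrow> ev (times_y a) = ycoord * ev a"
  by (simp add: vec_eq_iff ev_def ycoord_def poly_eval_times_y)

lemma ev_supported_eq_0:
  assumes "supported_on basis3 a" "ev a = 0"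
  shows "a = 0"
  using cols_basis_kernel_eq_0[OF cols_basis assms(1)] assms(2) by (simp add: ev_eq_0_iff)

lemma surj_ev_supported:
  obtains a where "supported_on basis3 a" "ev a = v"
proof -
  let ?A = "(\<lambda>m. axis m 1 :: real^mon3) ` basis3"
  have subspace: "subspace {a. supported_on basis3 a}"
    by (auto simp: subspace_def supported_on_def)
  have span_A: "span ?A \<subseteq> {a. supported_on basis3 a}"
    by (rule span_minimal[OF _ subspace]) (auto simp: supported_on_def axis_def)
  have indep: "independent ?A"
    by (rule independent_mono[OF independent_Basis]) auto
  have inj: "inj_on ev (span ?A)"
    using span_A ev_supported_eq_0
    by (subst linear_injective_on_subspace_0[OF linear_ev subspace_span]) auto
  have "dim (ev ` ?A) = dim ?A"
    by (rule dim_image_eq[OF linear_ev inj])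
  also have "\<dots> = card ?A"
    by (rule dim_eq_card_independent[OF indep])
  also have "\<dots> = CARD('p)"
    by (subst card_image) (auto simp: inj_on_def axis_eq_axis card_points)
  finally have "dim (ev ` ?A) = CARD('p)" .
  then have "span (ev ` ?A) = UNIV"
    using dim_eq_full[of "ev ` ?A"] by simp
  then have "v \<in> ev ` span ?A"
    by (metis span_linear_image[OF linear_ev] UNIV_I)
  then show thesis
    using span_A that by blast
qed

lemma ev_decomp:
  obtains g t where "degree_le2 g" "v = ev g + t *\<^sub>R ev (axis MXYY 1)"
proof -
  obtain a where a: "supported_on basis3 a" "ev a = v"
    by (rule surj_ev_supported)
  let ?g = "a - a $ MXYY *\<^sub>R axis MXYY 1"
  have "degree_le2 ?g"
    using a(1) by (simp add: degree_le2_iff_supported_on supported_on_def axis_def)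
  moreover have "v = ev ?g + a $ MXYY *\<^sub>R ev (axis MXYY 1)"
    using a(2) by (simp add: linear_diff[OF linear_ev] linear_scale[OF linear_ev])
  ultimately show thesis
    by (rule that)
qed

lemma ev_XYY_not_quadratic:
  assumes "degree_le2 g"
  shows "ev (axis MXYY 1) \<noteq> ev g"
proof
  assume "ev (axis MXYY 1) = ev g"
  then have "ev (axis MXYY 1 - g) = 0"
    by (simp add: linear_diff[OF linear_ev])
  moreover have "supported_on basis3 (axis MXYY 1 - g)"
    using assms by (simp add: degree_le2_iff_supported_on supported_on_def axis_def)
  ultimately have "axis MXYY 1 - g = 0"
    by (rule ev_supported_eq_0[rotated])
  then have "(axis MXYY 1 - g) $ MXYY = 0"
    by simp
  then show False
    using assms by (simp add: degree_le2_def)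
qed

definition lagrange :: "'p \<Rightarrow> real^mon3" where
  "lagrange i = (SOME a. ev a = axis i 1)"

lemma ev_lagrange: "ev (lagrange i) = axis i 1"
  unfolding lagrange_def by (rule someI_ex) (meson surj_ev_supported)

definition gram :: "real^'p^'p" where
  "gram = (\<chi> i j. moment_form \<beta> (lagrange i) (lagrange j))"

lemma gram_symmetric: "gram $ i $ j = gram $ j $ i"
  by (simp add: gram_def moment_form_commute)

lemma moment_form_eq_gram: "moment_form \<beta> a b = ev a \<bullet> (gram *v ev b)"
proof -
  define interp where "interp c = (\<Sum>i\<in>UNIV. ev c $ i *\<^sub>R lagrange i)" for c
  have ker: "M *v (c - interp c) = 0" for c
  proof -
    have "ev (interp c) = (\<Sum>i\<in>UNIV. ev c $ i *\<^sub>R axis i 1)"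
      by (simp add: interp_def linear_sum[OF linear_ev] linear_scale[OF linear_ev] ev_lagrange)
    also have "\<dots> = ev c"
      using basis_expansion[of "ev c"] by (simp add: scalar_mult_eq_scaleR)
    finally show ?thesis
      by (simp add: ev_eq_0_iff[symmetric] linear_diff[OF linear_ev])
  qed
  have "moment_form \<beta> a b = moment_form \<beta> (interp a) (interp b)"
    using ker[of a] ker[of b] moment_form_commute[of \<beta> "a - interp a"]
    by (simp add: moment_form_def inner_diff_left matrix_vector_mult_diff_distrib)
  also have "\<dots> = (\<Sum>i\<in>UNIV. \<Sum>j\<in>UNIV. ev a $ i * gram $ i $ j * ev b $ j)"
    unfolding interp_def bilinear_sum[OF bilinear_moment_form] sum.cartesian_product[symmetric]
    by (simp add: bilinear_lmul[OF bilinear_moment_form] bilinear_rmul[OF bilinear_moment_form]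
        gram_def algebra_simps)
  also have "\<dots> = ev a \<bullet> (gram *v ev b)"
    by (rule inner_matrix_vector_mult_expand[symmetric])
  finally show ?thesis .
qed

lemma YYY_column_reduction:
  obtains d r where "degree_le2 r" "M *v axis MYYY 1 = M *v (r + d *\<^sub>R axis MXYY 1)"
proof -
  obtain a where a: "supported_on basis3 a" "M *v a = M *v axis MYYY 1"
    by (rule cols_basis_reduce[OF cols_basis])
  let ?r = "a - a $ MXYY *\<^sub>R axis MXYY 1"
  have "degree_le2 ?r"
    using a(1) by (simp add: degree_le2_iff_supported_on supported_on_def axis_def)
  moreover have "M *v axis MYYY 1 = M *v (?r + a $ MXYY *\<^sub>R axis MXYY 1)"
    using a(2) by simp
  ultimately show thesis
    by (rule that)
qed

lemma gram_commutator_quadratic: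
  assumes "degree_le2 f" "degree_le2 g"
  shows "ev f \<bullet> (diag_commutator (s *\<^sub>R xcoord + t *\<^sub>R ycoord) gram *v ev g) = 0"
proof -
  have "(s *\<^sub>R xcoord + t *\<^sub>R ycoord) * ev h = ev (s *\<^sub>R times_x h + t *\<^sub>R times_y h)"
    if "degree_le2 h" for h
    using that by (simp add: linear_add[OF linear_ev] linear_scale[OF linear_ev] ev_times_x ev_times_y
        vec_eq_iff algebra_simps)
  then show ?thesis
    using assms
    by (simp add: inner_diag_commutator moment_form_eq_gram[symmetric] bilinear_ladd[OF bilinear_moment_form]
        bilinear_radd[OF bilinear_moment_form] bilinear_lmul[OF bilinear_moment_form]
        bilinear_rmul[OF bilinear_moment_form] moment_form_times_x moment_form_times_y)
qed

text \<open>
  On V, \<open>Y\<^sup>3 = r + d XY\<^sup>2\<close> gives \<open>(y - d x) xy\<^sup>2 = x r\<close>: multiplication by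
  \<open>y - d x\<close> sends the values of \<open>XY\<^sup>2\<close>, the one direction not reached by quadratics,
  to values of \<open>x r\<close>, and the Hankel identity \<open>\<langle>y f, XY\<^sup>2\<rangle> = \<langle>x f, Y\<^sup>3\<rangle>\<close>
  gives the matching statement for the moment form.
\<close>

lemma XYY_times_line:
  assumes r: "degree_le2 r" "M *v axis MYYY 1 = M *v (r + d *\<^sub>R axis MXYY 1)"
  shows "(ycoord - d *\<^sub>R xcoord) * ev (axis MXYY 1) = ev (times_x r)"
    and "degree_le2 f \<Longrightarrow>
      moment_form \<beta> (times_y f - d *\<^sub>R times_x f) (axis MXYY 1) = moment_form \<beta> f (times_x r)"
proof -
  let ?e = "axis MXYY 1 :: real^mon3"
  have "ev (axis MYYY 1) = ev r + d *\<^sub>R ev ?e"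
    using r(2) ev_eq_0_iff[of "axis MYYY 1 - (r + d *\<^sub>R ?e)"]
    by (simp add: linear_diff[OF linear_ev] linear_add[OF linear_ev] linear_scale[OF linear_ev]
        matrix_vector_mult_diff_distrib)
  then show "(ycoord - d *\<^sub>R xcoord) * ev ?e = ev (times_x r)"
    using r(1) by (simp add: vec_eq_iff ev_def poly_eval_times_x poly_eval_axis monomials_def xcoord_def
        ycoord_def algebra_simps eval_nat_numeral)
  assume f: "degree_le2 f"
  have "moment_form \<beta> (times_y f) ?e = moment_form \<beta> (times_x f) (r + d *\<^sub>R ?e)"
    using moment_form_times_y_XYY[OF f] r(2) by (simp add: moment_form_def)
  then show "moment_form \<beta> (times_y f - d *\<^sub>R times_x f) ?e = moment_form \<beta> f (times_x r)"
    using f r(1) by (simp add: bilinear_lsub[OF bilinear_moment_form] bilinear_lmul[OF bilinear_moment_form]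
        bilinear_radd[OF bilinear_moment_form] bilinear_rmul[OF bilinear_moment_form] moment_form_times_x)
qed

lemma gram_commutes_with_line:
  obtains d where "diag_commutator (ycoord - d *\<^sub>R xcoord) gram = 0"
proof -
  obtain d r where r: "degree_le2 r" "M *v axis MYYY 1 = M *v (r + d *\<^sub>R axis MXYY 1)"
    by (rule YYY_column_reduction)
  let ?e = "axis MXYY 1 :: real^mon3" and ?l = "ycoord - d *\<^sub>R xcoord"
  have "diag_commutator ?l gram = 0"
  proof (rule skew_matrix_eq_0)
    show "diag_commutator ?l gram $ i $ j = - diag_commutator ?l gram $ j $ i" for i j
      by (rule diag_commutator_skew[OF gram_symmetric])
    show "\<exists>u\<in>ev ` Collect degree_le2. \<exists>t. v = u + t *\<^sub>R ev ?e" for v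
      by (rule ev_decomp[of v]) blast
    show "u \<bullet> (diag_commutator ?l gram *v w) = 0"
      if "u \<in> ev ` Collect degree_le2" "w \<in> ev ` Collect degree_le2" for u w
      using that gram_commutator_quadratic[of _ _ "- d" 1] by auto
    show "u \<bullet> (diag_commutator ?l gram *v ev ?e) = 0" if u: "u \<in> ev ` Collect degree_le2" for u
    proof -
      obtain f where f: "degree_le2 f" "u = ev f"
        using u by blast
      have "?l * ev f = ev (times_y f - d *\<^sub>R times_x f)"
        using f(1) by (simp add: linear_diff[OF linear_ev] linear_scale[OF linear_ev] ev_times_x
            ev_times_y vec_eq_iff algebra_simps)
      then show ?thesis
        using f XYY_times_line[OF r]
        by (simp add: inner_diag_commutator moment_form_eq_gram[symmetric])
    qed
  qed
  then show thesis
    by (rule that)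
qed

lemma quadratic_image_hyperplane:
  obtains n :: "real^'p" where "n \<noteq> 0" "\<And>v. n \<bullet> v = 0 \<longleftrightarrow> (\<exists>g. degree_le2 g \<and> v = ev g)"
proof -
  let ?U = "ev ` Collect degree_le2" and ?e = "ev (axis MXYY 1)"
  have "subspace ?U"
    by (intro linear_subspace_image[OF linear_ev]) (auto simp: subspace_def degree_le2_def)
  moreover have "?e \<notin> ?U"
    using ev_XYY_not_quadratic by blast
  ultimately have "dim ?U < DIM(real^'p)"
    using dim_subset_UNIV[of ?U] dim_eq_full[of ?U] span_eq_iff[of ?U] by (metis UNIV_I le_neq_trans)
  then obtain n where n: "n \<noteq> 0" "\<And>y. y \<in> span ?U \<Longrightarrow> orthogonal n y"
    using orthogonal_to_subspace_exists by blast
  then have ortho: "n \<bullet> ev g = 0" if "degree_le2 g" for g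
    using that by (auto simp: orthogonal_def span_base)
  have n_e: "n \<bullet> ?e \<noteq> 0"
  proof
    assume "n \<bullet> ?e = 0"
    obtain g t where "degree_le2 g" "n = ev g + t *\<^sub>R ?e"
      by (rule ev_decomp)
    then have "n \<bullet> n = 0"
      using ortho \<open>n \<bullet> ?e = 0\<close> by (simp add: inner_add_right)
    then show False
      using n(1) by simp
  qed
  have "n \<bullet> v = 0 \<longleftrightarrow> (\<exists>g. degree_le2 g \<and> v = ev g)" for v
  proof
    assume "n \<bullet> v = 0"
    obtain g t where g: "degree_le2 g" "v = ev g + t *\<^sub>R ?e"
      by (rule ev_decomp)
    then have "t = 0"
      using ortho \<open>n \<bullet> v = 0\<close> n_e by (simp add: inner_add_right)
    then show "\<exists>g. degree_le2 g \<and> v = ev g"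
      using g by auto
  qed (auto simp: ortho)
  with n(1) show thesis
    by (rule that)
qed

lemma card_points_on_line_le: "card {k. ycoord $ k - d * xcoord $ k = c} \<le> 3"
proof -
  let ?K = "{k. ycoord $ k - d * xcoord $ k = c}"
  have "finite (variety M)"
    by (simp add: variety_eq_range)
  have "card ?K = card (pts ` ?K)"
    using pts_bij by (simp add: card_image bij_betw_def inj_on_def)
  also have "\<dots> \<le> card {z \<in> variety M. snd z = d * fst z + c}"
    using \<open>finite (variety M)\<close>
    by (intro card_mono) (auto simp: variety_eq_range xcoord_def ycoord_def)
  also have "\<dots> \<le> 3"
    by (rule card_variety_on_line_le[OF \<open>finite (variety M)\<close>])
  finally show ?thesis .
qed

lemma exists_quadratic_lagrange:
  assumes "card S \<le> 3" "k0 \<in> S" "inj_on (($) xcoord) S"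
  obtains f where "degree_le2 f" "\<And>k. k \<in> S - {k0} \<Longrightarrow> ev f $ k = 0" "ev f $ k0 \<noteq> 0"
proof -
  define P where "P = (\<Prod>l\<in>S - {k0}. [:- xcoord $ l, 1:])"
  have "degree P \<le> card (S - {k0})"
    unfolding P_def using degree_prod_sum_le[of "S - {k0}" "\<lambda>l. [:- xcoord $ l, 1:]"]
    by (simp add: comp_def)
  also have "\<dots> \<le> 2"
    using assms(1,2) by (simp add: card_Diff_singleton)
  finally obtain f where f: "degree_le2 f" "\<And>z. poly_eval f z = poly P (fst z)"
    using exists_degree_le2_poly_eval_eq_poly by blast
  have ev_f: "ev f $ k = (\<Prod>l\<in>S - {k0}. xcoord $ k - xcoord $ l)" for k
    by (simp add: ev_def f(2) P_def poly_prod xcoord_def)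
  show thesis
  proof
    show "ev f $ k = 0" if "k \<in> S - {k0}" for k
      using that by (auto simp: ev_f prod_zero_iff)
    show "ev f $ k0 \<noteq> 0"
      using assms(2,3) by (auto simp: ev_f inj_on_def)
  qed (rule f(1))
qed

lemma normal_not_supported_on_small_set:
  fixes n :: "real^'p"
  assumes n: "n \<noteq> 0" "\<And>g. degree_le2 g \<Longrightarrow> n \<bullet> ev g = 0"
    and "card S \<le> 3" "inj_on (($) xcoord) S"
  shows "\<exists>l. l \<notin> S \<and> n $ l \<noteq> 0"
proof (rule ccontr)
  assume "\<not> ?thesis"
  then have out: "n $ l = 0" if "l \<notin> S" for l
    using that by blast
  obtain k0 where k0: "n $ k0 \<noteq> 0"
    using n(1) by (auto simp: vec_eq_iff)
  then have "k0 \<in> S"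
    using out by blast
  then obtain f where f: "degree_le2 f" "\<And>k. k \<in> S - {k0} \<Longrightarrow> ev f $ k = 0" "ev f $ k0 \<noteq> 0"
    using exists_quadratic_lagrange[OF assms(3) _ assms(4)] by blast
  have "n \<bullet> ev f = n $ k0 * ev f $ k0 + (\<Sum>k\<in>UNIV - {k0}. n $ k * ev f $ k)"
    by (simp add: inner_vec_def sum.remove)
  also have "(\<Sum>k\<in>UNIV - {k0}. n $ k * ev f $ k) = 0"
    using out f(2) by (intro sum.neutral) auto
  finally show False
    using n(2)[OF f(1)] k0 f(3) by simp
qed

lemma x_commutator_small_block_eq_0:
  assumes "card S \<le> 3" "inj_on (($) xcoord) S" "i \<in> S" "j \<in> S"
    and block: "\<And>a b. a \<in> S \<Longrightarrow> b \<notin> S \<Longrightarrow> gram $ a $ b = 0"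
  shows "diag_commutator xcoord gram $ i $ j = 0"
proof -
  obtain n where n: "n \<noteq> 0" "\<And>v. n \<bullet> v = 0 \<longleftrightarrow> (\<exists>g. degree_le2 g \<and> v = ev g)"
    using quadratic_image_hyperplane by metis
  then obtain l where l: "l \<notin> S" "n $ l \<noteq> 0"
    using normal_not_supported_on_small_set[OF n(1) _ assms(1,2)] by blast
  show ?thesis
  proof (rule skew_matrix_entry_eq_0[OF _ l(2)])
    show "u \<bullet> (diag_commutator xcoord gram *v w) = 0" if "n \<bullet> u = 0" "n \<bullet> w = 0" for u w
      using that n(2) gram_commutator_quadratic[of _ _ 1 0] by auto
    show "diag_commutator xcoord gram $ l $ l = 0"
      by (simp add: diag_commutator_def)
    show "diag_commutator xcoord gram $ i $ l = 0" "diag_commutator xcoord gram $ l $ j = 0"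
      using block[OF \<open>i \<in> S\<close> l(1)] block[OF \<open>j \<in> S\<close> l(1)] gram_symmetric[of l j]
      by (simp_all add: diag_commutator_def)
  qed
qed

lemma gram_off_diagonal:
  assumes "i \<noteq> j"
  shows "gram $ i $ j = 0"
proof (rule ccontr)
  assume W_ij: "gram $ i $ j \<noteq> 0"
  obtain d where commutes: "diag_commutator (ycoord - d *\<^sub>R xcoord) gram = 0"
    by (rule gram_commutes_with_line)
  define line where "line k = ycoord $ k - d * xcoord $ k" for k
  have separate: "gram $ a $ b = 0" if "line a \<noteq> line b" for a b
  proof -
    have "(line a - line b) * gram $ a $ b = 0"
      using commutes[THEN arg_cong[where f = "\<lambda>Z. Z $ a $ b"]]
      by (simp add: diag_commutator_def line_def)
    with that show ?thesis
      by simp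
  qed
  define S where "S = {k. line k = line i}"
  have "i \<in> S" "j \<in> S"
    using separate[of i j] W_ij unfolding S_def by (metis mem_Collect_eq)+
  have inj_x: "inj_on (($) xcoord) S"
  proof (rule inj_onI)
    fix a b assume "a \<in> S" "b \<in> S" "xcoord $ a = xcoord $ b"
    then have "pts a = pts b"
      by (simp add: S_def line_def xcoord_def ycoord_def prod_eq_iff)
    then show "a = b"
      using pts_bij by (simp add: bij_betw_def inj_on_def)
  qed
  have "card S \<le> 3"
    unfolding S_def line_def by (rule card_points_on_line_le)
  then have "diag_commutator xcoord gram $ i $ j = 0"
    using inj_x \<open>i \<in> S\<close> \<open>j \<in> S\<close> by (rule x_commutator_small_block_eq_0) (auto simp: S_def separate)
  then show False
    using W_ij inj_x \<open>i \<in> S\<close> \<open>j \<in> S\<close> assms by (auto simp: diag_commutator_def inj_on_def)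
qed

lemma gram_diagonal_nonneg: "0 \<le> gram $ k $ k"
  using psd by (simp add: gram_def moment_form_def psd_def)

lemma moment_matrix3_eq_atomic:
  "M $ r $ c = (\<Sum>k\<in>UNIV. gram $ k $ k * (monomials (pts k) $ r * monomials (pts k) $ c))"
proof -
  have "M $ r $ c = ev (axis r 1) \<bullet> (gram *v ev (axis c 1))"
    by (simp add: moment_form_eq_gram[symmetric] moment_form_def axis_inner_matrix_axis)
  also have "\<dots> = (\<Sum>k\<in>UNIV. ev (axis r 1) $ k * gram $ k $ k * ev (axis c 1) $ k)"
    unfolding inner_matrix_vector_mult_expand
  proof (intro sum.cong refl)
    show "(\<Sum>j\<in>UNIV. ev (axis r 1) $ k * gram $ k $ j * ev (axis c 1) $ j)
        = ev (axis r 1) $ k * gram $ k $ k * ev (axis c 1) $ k" for k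
      by (subst sum.remove[of _ k]) (auto simp: gram_off_diagonal)
  qed
  finally show ?thesis
    by (simp add: ev_def poly_eval_axis algebra_simps)
qed

lemma representing_measure_atomic: "representing_measure \<beta> (atomic_measure (\<lambda>k. gram $ k $ k) pts)"
  unfolding representing_measure_def
proof (intro conjI allI impI)
  show "sets (atomic_measure (\<lambda>k. gram $ k $ k) pts) = sets borel"
    by (simp add: atomic_measure_def)
  fix i j :: nat assume "i + j \<le> 6"
  then obtain r c where rc: "fst (expo r) + fst (expo c) = i" "snd (expo r) + snd (expo c) = j"
    by (rule expo_add_surj)
  have mon: "fst z ^ i * snd z ^ j = monomials z $ r * monomials z $ c" for z :: "real \<times> real"
    by (simp add: monomials_def rc[symmetric] power_add algebra_simps)
  have "(\<lambda>z::real \<times> real. fst z ^ i * snd z ^ j) \<in> borel_measurable borel"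
    by (intro borel_measurable_continuous_onI continuous_intros)
  note atomic = atomic_measure_integral[OF gram_diagonal_nonneg this]
  show "integrable (atomic_measure (\<lambda>k. gram $ k $ k) pts) (\<lambda>z. fst z ^ i * snd z ^ j)"
    by (rule atomic(1))
  show "\<beta> i j = (\<integral>z. fst z ^ i * snd z ^ j \<partial>atomic_measure (\<lambda>k. gram $ k $ k) pts)"
  proof -
    have "\<beta> i j = M $ r $ c"
      by (simp add: moment_matrix3_entry rc)
    also have "\<dots> = (\<Sum>k\<in>UNIV. gram $ k $ k * (fst (pts k) ^ i * snd (pts k) ^ j))"
      by (simp add: moment_matrix3_eq_atomic mon)
    also have "\<dots> = (\<integral>z. fst z ^ i * snd z ^ j \<partial>atomic_measure (\<lambda>k. gram $ k $ k) pts)"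
      by (rule atomic(2)[symmetric])
    finally show ?thesis .
  qed
qed

end

theorem theorem4p4:
  fixes \<beta> :: "nat \<Rightarrow> nat \<Rightarrow> real"
  assumes "psd (moment_matrix3 \<beta>)"
    and "pd (moment_matrix2 \<beta>)"
    and "rank (moment_matrix3 \<beta>) = 7"
    and "card (variety (moment_matrix3 \<beta>)) = 7"
    and "cols_basis (moment_matrix3 \<beta>) {M1, MX, MY, MXX, MXY, MYY, MXYY}"
  shows "(\<exists>\<mu>. representing_measure \<beta> \<mu>) \<longleftrightarrow> weakly_consistent (moment_matrix3 \<beta>)"
proof
  assume "\<exists>\<mu>. representing_measure \<beta> \<mu>"
  then show "weakly_consistent (moment_matrix3 \<beta>)"
    using weakly_consistent_if_representing_measure by blast
next
  assume consistent: "weakly_consistent (moment_matrix3 \<beta>)"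
  have "finite (variety (moment_matrix3 \<beta>))"
    using assms(4) by (intro card_ge_0_finite) simp
  moreover have "card (UNIV :: 7 set) = card (variety (moment_matrix3 \<beta>))"
    using assms(4) by simp
  ultimately obtain pts :: "7 \<Rightarrow> real \<times> real" where "bij_betw pts UNIV (variety (moment_matrix3 \<beta>))"
    using finite_same_card_bij[OF finite] by blast
  then interpret seven_point_variety \<beta> pts
    using assms(1,5) consistent by unfold_locales simp_all
  show "\<exists>\<mu>. representing_measure \<beta> \<mu>"
    using representing_measure_atomic by blast
qed

end
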